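(* Let $R$ be a ring, $M$ a nonzero left $R$-module, $\Omega$ an infinite set, and $E=\mathrm{End}_R(\bigoplus_{i\in\Omega}M)$ or $E=\mathrm{End}_R(\prod_{i\in\Omega}M)$. If $U\subseteq E$ generates $E$ as a ring, then there exists a positive integer $n$ such that every element of $E$ is represented by a ring word of length at most $n$ in elements of $U$.
   Context: Rings are unital and associative. Ring words: for a ring $S$ and a subset $U\subseteq S$, an element $r\in S$ is represented by a ring word of length $1$ in elements of $U$ if $r\in U\cup\{0,1,-1\}$; recursively, $r$ is represented by a ring word of length $n$ in elements of $U$ if $r=p+q$ or $r=pq$ for some $p,q\in S$ represented by ring words of lengths $m_1$ and $m_2$ respectively in elements of $U$, with $n=m_1+m_2$. $U$ generates $E$ as a ring means every element of $E$ is represented by some ring word (of some length) in elements of $U$. *)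

theory Defs
  imports "HOL-Algebra.Ring"
begin

definition left_module :: "('r::ring_1 \<Rightarrow> 'm::ab_group_add \<Rightarrow> 'm) \<Rightarrow> bool" where
  "left_module smult \<longleftrightarrow>
     (\<forall>a x y. smult a (x + y) = smult a x + smult a y) \<and>
     (\<forall>a b x. smult (a + b) x = smult a x + smult b x) \<and>
     (\<forall>a b x. smult (a * b) x = smult a (smult b x)) \<and>
     (\<forall>x. smult 1 x = x)"

text \<open>Direct sum and direct product of copies of M indexed by Omega, realised as
  functions vanishing outside Omega (finitely supported for the direct sum).\<close>
definition dsum :: "'i set \<Rightarrow> ('i \<Rightarrow> 'm::zero) set" where
  "dsum \<Omega> = {f. (\<forall>i. i \<notin> \<Omega> \<longrightarrow> f i = 0) \<and> finite {i. f i \<noteq> 0}}"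

definition dprod :: "'i set \<Rightarrow> ('i \<Rightarrow> 'm::zero) set" where
  "dprod \<Omega> = {f. \<forall>i. i \<notin> \<Omega> \<longrightarrow> f i = 0}"

text \<open>R-linear endomorphisms of the submodule C of 'i => 'm (pointwise module
  structure), made extensional by mapping everything outside C to 0.\<close>
definition endos :: "('r::ring_1 \<Rightarrow> 'm::ab_group_add \<Rightarrow> 'm) \<Rightarrow> ('i \<Rightarrow> 'm) set
    \<Rightarrow> (('i \<Rightarrow> 'm) \<Rightarrow> ('i \<Rightarrow> 'm)) set" where
  "endos smult C = {\<phi>. (\<forall>x\<in>C. \<phi> x \<in> C) \<and>
      (\<forall>x\<in>C. \<forall>y\<in>C. \<phi> (\<lambda>i. x i + y i) = (\<lambda>i. \<phi> x i + \<phi> y i)) \<and>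
      (\<forall>a. \<forall>x\<in>C. \<phi> (\<lambda>i. smult a (x i)) = (\<lambda>i. smult a (\<phi> x i))) \<and>
      (\<forall>x. x \<notin> C \<longrightarrow> \<phi> x = (\<lambda>i. 0))}"

definition End_ring :: "('r::ring_1 \<Rightarrow> 'm::ab_group_add \<Rightarrow> 'm) \<Rightarrow> ('i \<Rightarrow> 'm) set
    \<Rightarrow> (('i \<Rightarrow> 'm) \<Rightarrow> ('i \<Rightarrow> 'm)) ring" where
  "End_ring smult C =
     \<lparr>carrier = endos smult C,
      mult = (\<lambda>\<phi> \<psi>. \<phi> \<circ> \<psi>),
      one = (\<lambda>x. if x \<in> C then x else (\<lambda>i. 0)),
      zero = (\<lambda>x i. 0),
      add = (\<lambda>\<phi> \<psi> x i. \<phi> x i + \<psi> x i)\<rparr>"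

inductive rword :: "('a, 'b) ring_scheme \<Rightarrow> 'a set \<Rightarrow> nat \<Rightarrow> 'a \<Rightarrow> bool"
  for S :: "('a, 'b) ring_scheme" and U :: "'a set" where
  base: "r \<in> U \<or> r = \<zero>\<^bsub>S\<^esub> \<or> r = \<one>\<^bsub>S\<^esub> \<or> r = \<ominus>\<^bsub>S\<^esub> \<one>\<^bsub>S\<^esub> \<Longrightarrow> rword S U 1 r"
| add: "rword S U m1 p \<Longrightarrow> rword S U m2 q \<Longrightarrow> rword S U (m1 + m2) (p \<oplus>\<^bsub>S\<^esub> q)"
| mul: "rword S U m1 p \<Longrightarrow> rword S U m2 q \<Longrightarrow> rword S U (m1 + m2) (p \<otimes>\<^bsub>S\<^esub> q)"

definition generates_ring :: "('a, 'b) ring_scheme \<Rightarrow> 'a set \<Rightarrow> bool" where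
  "generates_ring S U \<longleftrightarrow> (\<forall>r \<in> carrier S. \<exists>n. rword S U n r)"

end

theory Submission
  imports Defs
begin

text \<open>
  Since \<Omega> is infinite, it splits into countably many blocks, each in bijection with \<Omega>.
  Hence E contains elements a(n), b(n) (insert a vector into block n, read block n back)
  such that every sequence f(0), f(1), ... in E is realised as f(n) = b(n) g a(n) by a
  single block-diagonal g in E.  If no n bounded the word lengths of the elements
  b(n) w a(n) with |w| \<le> n, choose f(n) as a witness for n; the word length N of g then
  gives f(N) = b(N) g a(N) with |g| = N, a contradiction.  So for some n every element
  of E has length at most |b(n)| + n + |a(n)|.
\<close>

lemma rword_length_pos: "rword S U n r \<Longrightarrow> n > 0"
  by (induction rule: rword.induct) auto

lemma uniform_word_length_bound:
  fixes a b :: "nat \<Rightarrow> 'a"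
  assumes gen: "generates_ring S U"
    and a: "range a \<subseteq> carrier S" and b: "range b \<subseteq> carrier S"
    and diag: "\<And>f. range f \<subseteq> carrier S \<Longrightarrow>
                  \<exists>g \<in> carrier S. \<forall>n. b n \<otimes>\<^bsub>S\<^esub> (g \<otimes>\<^bsub>S\<^esub> a n) = f n"
  shows "\<exists>n>0. \<forall>r \<in> carrier S. \<exists>k \<le> n. rword S U k r"
proof -
  have "\<exists>i. \<forall>f \<in> carrier S. \<exists>w k. k \<le> i \<and> rword S U k w \<and> f = b i \<otimes>\<^bsub>S\<^esub> (w \<otimes>\<^bsub>S\<^esub> a i)"
  proof (rule ccontr)
    assume "\<not> ?thesis"
    then have "\<forall>i. \<exists>f. f \<in> carrier S \<and>
        (\<forall>w k. k \<le> i \<longrightarrow> rword S U k w \<longrightarrow> f \<noteq> b i \<otimes>\<^bsub>S\<^esub> (w \<otimes>\<^bsub>S\<^esub> a i))"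
      by blast
    then obtain f where f: "\<And>i. f i \<in> carrier S"
      and f_long: "\<And>i w k. k \<le> i \<Longrightarrow> rword S U k w \<Longrightarrow> f i \<noteq> b i \<otimes>\<^bsub>S\<^esub> (w \<otimes>\<^bsub>S\<^esub> a i)"
      by metis
    then obtain g where "g \<in> carrier S" and g: "\<And>n. b n \<otimes>\<^bsub>S\<^esub> (g \<otimes>\<^bsub>S\<^esub> a n) = f n"
      using diag[of f] by blast
    then obtain N where "rword S U N g"
      using gen unfolding generates_ring_def by blast
    then have "f N \<noteq> b N \<otimes>\<^bsub>S\<^esub> (g \<otimes>\<^bsub>S\<^esub> a N)"
      by (rule f_long[OF order.refl])
    with g show False by simp
  qed
  then obtain i where i: "\<And>f. f \<in> carrier S \<Longrightarrow>
      \<exists>w k. k \<le> i \<and> rword S U k w \<and> f = b i \<otimes>\<^bsub>S\<^esub> (w \<otimes>\<^bsub>S\<^esub> a i)"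
    by blast
  have "a i \<in> carrier S" "b i \<in> carrier S"
    using a b by auto
  then obtain ka kb where ka: "rword S U ka (a i)" and kb: "rword S U kb (b i)"
    using gen unfolding generates_ring_def by meson
  have "\<exists>k \<le> kb + i + ka. rword S U k r" if r: "r \<in> carrier S" for r
  proof -
    obtain w k where "k \<le> i" "rword S U k w" "r = b i \<otimes>\<^bsub>S\<^esub> (w \<otimes>\<^bsub>S\<^esub> a i)"
      using i[OF r] by blast
    then have "k \<le> i" "rword S U (kb + (k + ka)) r"
      using ka kb by (simp_all add: rword.mul)
    then show ?thesis by (intro exI[of _ "kb + (k + ka)"]) auto
  qed
  moreover have "kb + i + ka > 0" using rword_length_pos[OF kb] by simp
  ultimately show ?thesis by blast
qed

lemma infinite_embeds_nat_times:
  assumes "infinite (A :: 'i set)"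
  shows "\<exists>e :: nat \<times> 'i \<Rightarrow> 'i. inj_on e (UNIV \<times> A) \<and> e ` (UNIV \<times> A) \<subseteq> A"
proof -
  have "(card_of (UNIV :: nat set), card_of A) \<in> ordLeq"
    using assms infinite_iff_card_of_nat by blast
  then have "(card_of ((UNIV :: nat set) \<times> A), card_of (A \<times> A)) \<in> ordLeq"
    by (rule card_of_Times_mono1)
  moreover have "(card_of (A \<times> A), card_of A) \<in> ordIso"
    using assms by (rule card_of_Times_same_infinite)
  ultimately have "(card_of ((UNIV :: nat set) \<times> A), card_of A) \<in> ordLeq"
    by (rule ordLeq_ordIso_trans)
  then show ?thesis
    using card_of_ordLeq by blast
qed

lemma left_module_smult_zero: "left_module smult \<Longrightarrow> smult a 0 = 0"
  unfolding left_module_def by (metis add_cancel_right_right)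

lemma endos_in: "\<phi> \<in> endos smult C \<Longrightarrow> x \<in> C \<Longrightarrow> \<phi> x \<in> C"
  unfolding endos_def by blast

lemma endos_add:
  "\<phi> \<in> endos smult C \<Longrightarrow> x \<in> C \<Longrightarrow> y \<in> C \<Longrightarrow> \<phi> (\<lambda>i. x i + y i) = (\<lambda>i. \<phi> x i + \<phi> y i)"
  unfolding endos_def by blast

lemma endos_smult:
  "\<phi> \<in> endos smult C \<Longrightarrow> x \<in> C \<Longrightarrow> \<phi> (\<lambda>i. smult a (x i)) = (\<lambda>i. smult a (\<phi> x i))"
  unfolding endos_def by blast

lemma endos_zero:
  assumes "\<phi> \<in> endos smult C" and "(\<lambda>i. 0) \<in> C"
  shows "\<phi> (\<lambda>i. 0) = (\<lambda>i. 0)"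
proof -
  have "\<phi> (\<lambda>i. 0) = (\<lambda>i. \<phi> (\<lambda>i. 0) i + \<phi> (\<lambda>i. 0) i)"
    using endos_add[OF assms(1) assms(2) assms(2)] by simp
  then show ?thesis by (metis add_cancel_right_right)
qed

text \<open>
  The blocks are the sets e ` ({n} \<times> \<Omega>), with w \<in> \<Omega> sitting at e (n, w) in block n.
\<close>

locale nat_blocks =
  fixes smult :: "'r::ring_1 \<Rightarrow> 'm::ab_group_add \<Rightarrow> 'm"
    and \<Omega> :: "'i set"
    and C :: "('i \<Rightarrow> 'm) set"
    and e :: "nat \<times> 'i \<Rightarrow> 'i"
  assumes module: "left_module smult"
    and C_cases: "C = dsum \<Omega> \<or> C = dprod \<Omega>"
    and e_inj: "inj_on e (UNIV \<times> \<Omega>)"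
    and e_into: "e ` (UNIV \<times> \<Omega>) \<subseteq> \<Omega>"
begin

definition block_of :: "'i \<Rightarrow> nat \<times> 'i" where
  "block_of = inv_into (UNIV \<times> \<Omega>) e"

definition block_inj :: "nat \<Rightarrow> ('i \<Rightarrow> 'm) \<Rightarrow> ('i \<Rightarrow> 'm)" where
  "block_inj n x = (if x \<in> C
     then (\<lambda>j. if j \<in> e ` ({n} \<times> \<Omega>) then x (snd (block_of j)) else 0)
     else (\<lambda>j. 0))"

definition block_proj :: "nat \<Rightarrow> ('i \<Rightarrow> 'm) \<Rightarrow> ('i \<Rightarrow> 'm)" where
  "block_proj n y = (if y \<in> C then (\<lambda>w. if w \<in> \<Omega> then y (e (n, w)) else 0) else (\<lambda>j. 0))"

definition block_diag :: "(nat \<Rightarrow> ('i \<Rightarrow> 'm) \<Rightarrow> ('i \<Rightarrow> 'm)) \<Rightarrow> ('i \<Rightarrow> 'm) \<Rightarrow> ('i \<Rightarrow> 'm)" where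
  "block_diag F y = (if y \<in> C
     then (\<lambda>j. if j \<in> e ` (UNIV \<times> \<Omega>)
                then F (fst (block_of j)) (block_proj (fst (block_of j)) y) (snd (block_of j))
                else 0)
     else (\<lambda>j. 0))"

lemma block_of_e: "w \<in> \<Omega> \<Longrightarrow> block_of (e (n, w)) = (n, w)"
  unfolding block_of_def using e_inj by simp

lemma smult_zero: "smult a 0 = 0"
  using module by (rule left_module_smult_zero)

lemma zero_in_C: "(\<lambda>i. 0) \<in> C"
  using C_cases by (auto simp: dsum_def dprod_def)

lemma C_vanishes_outside: "x \<in> C \<Longrightarrow> i \<notin> \<Omega> \<Longrightarrow> x i = 0"
  using C_cases by (auto simp: dsum_def dprod_def)

lemma C_finite_support: "x \<in> C \<Longrightarrow> C = dsum \<Omega> \<Longrightarrow> finite {i. x i \<noteq> 0}"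
  by (auto simp: dsum_def)

lemma C_memI:
  "(\<And>i. i \<notin> \<Omega> \<Longrightarrow> z i = 0) \<Longrightarrow> (C = dsum \<Omega> \<Longrightarrow> finite {i. z i \<noteq> 0}) \<Longrightarrow> z \<in> C"
  using C_cases by (auto simp: dsum_def dprod_def)

lemma C_add: "x \<in> C \<Longrightarrow> y \<in> C \<Longrightarrow> (\<lambda>i. x i + y i) \<in> C"
proof (rule C_memI)
  assume x: "x \<in> C" and y: "y \<in> C"
  show "\<And>i. i \<notin> \<Omega> \<Longrightarrow> x i + y i = 0"
    by (simp add: C_vanishes_outside[OF x] C_vanishes_outside[OF y])
  assume "C = dsum \<Omega>"
  moreover have "{i. x i + y i \<noteq> 0} \<subseteq> {i. x i \<noteq> 0} \<union> {i. y i \<noteq> 0}" by auto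
  ultimately show "finite {i. x i + y i \<noteq> 0}"
    using C_finite_support[OF x] C_finite_support[OF y] finite_subset by blast
qed

lemma C_smult: "x \<in> C \<Longrightarrow> (\<lambda>i. smult a (x i)) \<in> C"
proof (rule C_memI)
  assume x: "x \<in> C"
  show "\<And>i. i \<notin> \<Omega> \<Longrightarrow> smult a (x i) = 0"
    by (simp add: C_vanishes_outside[OF x] smult_zero)
  assume "C = dsum \<Omega>"
  moreover have "{i. smult a (x i) \<noteq> 0} \<subseteq> {i. x i \<noteq> 0}" using smult_zero by auto
  ultimately show "finite {i. smult a (x i) \<noteq> 0}"
    using C_finite_support[OF x] finite_subset by blast
qed

lemma block_inj_in_C: "x \<in> C \<Longrightarrow> block_inj n x \<in> C"
proof (rule C_memI)
  assume x: "x \<in> C"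
  show "\<And>i. i \<notin> \<Omega> \<Longrightarrow> block_inj n x i = 0"
    using x e_into unfolding block_inj_def by auto
  assume "C = dsum \<Omega>"
  moreover have "{j. block_inj n x j \<noteq> 0} \<subseteq> e ` ({n} \<times> {w. x w \<noteq> 0})"
    using x block_of_e unfolding block_inj_def by (auto split: if_splits)
  ultimately show "finite {j. block_inj n x j \<noteq> 0}"
    using C_finite_support[OF x] finite_subset by blast
qed

lemma block_inj_endo: "block_inj n \<in> endos smult C"
  unfolding endos_def
proof (intro CollectI conjI ballI allI impI)
  show "\<And>x. x \<in> C \<Longrightarrow> block_inj n x \<in> C"
    by (rule block_inj_in_C)
  show "\<And>x y. x \<in> C \<Longrightarrow> y \<in> C \<Longrightarrow>
      block_inj n (\<lambda>i. x i + y i) = (\<lambda>i. block_inj n x i + block_inj n y i)"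
    using C_add unfolding block_inj_def by (auto simp: fun_eq_iff)
  show "\<And>a x. x \<in> C \<Longrightarrow> block_inj n (\<lambda>i. smult a (x i)) = (\<lambda>i. smult a (block_inj n x i))"
    using C_smult smult_zero unfolding block_inj_def by (auto simp: fun_eq_iff)
  show "\<And>x. x \<notin> C \<Longrightarrow> block_inj n x = (\<lambda>i. 0)"
    unfolding block_inj_def by auto
qed

lemma block_proj_in_C: "y \<in> C \<Longrightarrow> block_proj n y \<in> C"
proof (rule C_memI)
  assume y: "y \<in> C"
  show "\<And>i. i \<notin> \<Omega> \<Longrightarrow> block_proj n y i = 0"
    using y unfolding block_proj_def by auto
  assume "C = dsum \<Omega>"
  moreover have "inj_on (\<lambda>w. e (n, w)) \<Omega>"
    using e_inj unfolding inj_on_def by auto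
  moreover have "{j. block_proj n y j \<noteq> 0} \<subseteq> (\<lambda>w. e (n, w)) -` {i. y i \<noteq> 0} \<inter> \<Omega>"
    using y unfolding block_proj_def by (auto split: if_splits)
  ultimately show "finite {j. block_proj n y j \<noteq> 0}"
    using C_finite_support[OF y] finite_vimage_IntI finite_subset by metis
qed

lemma block_proj_endo: "block_proj n \<in> endos smult C"
  unfolding endos_def
proof (intro CollectI conjI ballI allI impI)
  show "\<And>x. x \<in> C \<Longrightarrow> block_proj n x \<in> C"
    by (rule block_proj_in_C)
  show "\<And>x y. x \<in> C \<Longrightarrow> y \<in> C \<Longrightarrow>
      block_proj n (\<lambda>i. x i + y i) = (\<lambda>i. block_proj n x i + block_proj n y i)"
    using C_add unfolding block_proj_def by (auto simp: fun_eq_iff)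
  show "\<And>a x. x \<in> C \<Longrightarrow> block_proj n (\<lambda>i. smult a (x i)) = (\<lambda>i. smult a (block_proj n x i))"
    using C_smult smult_zero unfolding block_proj_def by (auto simp: fun_eq_iff)
  show "\<And>x. x \<notin> C \<Longrightarrow> block_proj n x = (\<lambda>i. 0)"
    unfolding block_proj_def by auto
qed

lemma block_proj_block_inj: "x \<in> C \<Longrightarrow> block_proj n (block_inj n x) = x"
  using block_inj_in_C[of x n] block_of_e C_vanishes_outside
  unfolding block_proj_def block_inj_def by (auto simp: fun_eq_iff)

text \<open>
  For the direct sum, block_diag F y has finite support because y meets only finitely
  many blocks and on each of them F n preserves finite support.
\<close>

lemma block_diag_in_C:
  assumes F: "\<And>n. F n \<in> endos smult C" and y: "y \<in> C"
  shows "block_diag F y \<in> C"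
proof (rule C_memI)
  show "\<And>i. i \<notin> \<Omega> \<Longrightarrow> block_diag F y i = 0"
    using y e_into unfolding block_diag_def by auto
  assume dsum: "C = dsum \<Omega>"
  define I where "I = (fst \<circ> block_of) ` {j. y j \<noteq> 0}"
  have "{j. block_diag F y j \<noteq> 0} \<subseteq> e ` (SIGMA n:I. {w. F n (block_proj n y) w \<noteq> 0})"
  proof
    fix j assume "j \<in> {j. block_diag F y j \<noteq> 0}"
    then obtain n w where w: "w \<in> \<Omega>" "j = e (n, w)" and nz: "F n (block_proj n y) w \<noteq> 0"
      using y block_of_e unfolding block_diag_def by (auto split: if_splits)
    then have "block_proj n y \<noteq> (\<lambda>i. 0)"
      using endos_zero[OF F zero_in_C] by auto
    then obtain w' where "block_proj n y w' \<noteq> 0"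
      by auto
    then have "w' \<in> \<Omega>" "y (e (n, w')) \<noteq> 0"
      using y unfolding block_proj_def by (auto split: if_splits)
    then have "n \<in> I"
      unfolding I_def using block_of_e by (auto intro!: image_eqI[where x = "e (n, w')"])
    with w nz show "j \<in> e ` (SIGMA n:I. {w. F n (block_proj n y) w \<noteq> 0})" by auto
  qed
  moreover have "finite (SIGMA n:I. {w. F n (block_proj n y) w \<noteq> 0})"
    using C_finite_support[OF y dsum] C_finite_support[OF endos_in[OF F block_proj_in_C[OF y]] dsum]
    unfolding I_def by (intro finite_SigmaI) auto
  ultimately show "finite {j. block_diag F y j \<noteq> 0}"
    using finite_subset by blast
qed

lemma block_diag_endo:
  assumes F: "\<And>n. F n \<in> endos smult C"
  shows "block_diag F \<in> endos smult C"
  unfolding endos_def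
proof (intro CollectI conjI ballI allI impI)
  show "\<And>x. x \<in> C \<Longrightarrow> block_diag F x \<in> C"
    using block_diag_in_C F by blast
  show "block_diag F (\<lambda>i. x i + y i) = (\<lambda>i. block_diag F x i + block_diag F y i)"
    if x: "x \<in> C" and y: "y \<in> C" for x y
  proof -
    have "F n (block_proj n (\<lambda>i. x i + y i)) = (\<lambda>i. F n (block_proj n x) i + F n (block_proj n y) i)"
      for n
      using endos_add[OF block_proj_endo x y] endos_add[OF F block_proj_in_C[OF x] block_proj_in_C[OF y]]
      by simp
    then show ?thesis
      using x y C_add[OF x y] unfolding block_diag_def by (auto simp: fun_eq_iff)
  qed
  show "block_diag F (\<lambda>i. smult a (x i)) = (\<lambda>i. smult a (block_diag F x i))"
    if x: "x \<in> C" for a x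
  proof -
    have "F n (block_proj n (\<lambda>i. smult a (x i))) = (\<lambda>i. smult a (F n (block_proj n x) i))" for n
      using endos_smult[OF block_proj_endo x] endos_smult[OF F block_proj_in_C[OF x]] by simp
    then show ?thesis
      using x C_smult[OF x] smult_zero unfolding block_diag_def by (auto simp: fun_eq_iff)
  qed
  show "\<And>x. x \<notin> C \<Longrightarrow> block_diag F x = (\<lambda>i. 0)"
    unfolding block_diag_def by auto
qed

lemma block_proj_diag_inj:
  assumes F: "\<And>n. F n \<in> endos smult C"
  shows "block_proj n \<circ> (block_diag F \<circ> block_inj n) = F n"
proof
  fix x
  show "(block_proj n \<circ> (block_diag F \<circ> block_inj n)) x = F n x"
  proof (cases "x \<in> C")
    case False
    then show ?thesis
      using endos_zero[OF block_diag_endo[OF F] zero_in_C] endos_zero[OF block_proj_endo zero_in_C] F[of n]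
      unfolding block_inj_def endos_def by auto
  next
    case True
    have inj_x: "block_inj n x \<in> C"
      using block_inj_in_C[OF True] .
    have "block_diag F (block_inj n x) (e (n, w)) = F n x w" if "w \<in> \<Omega>" for w
      using that inj_x block_of_e[OF that] block_proj_block_inj[OF True]
      unfolding block_diag_def by auto
    then show ?thesis
      using block_diag_in_C[OF F inj_x] C_vanishes_outside[OF endos_in[OF F True]]
      unfolding block_proj_def by (auto simp: fun_eq_iff)
  qed
qed

lemma End_ring_block_diagonal:
  assumes "range F \<subseteq> carrier (End_ring smult C)"
  shows "\<exists>g \<in> carrier (End_ring smult C). \<forall>n.
           block_proj n \<otimes>\<^bsub>End_ring smult C\<^esub> (g \<otimes>\<^bsub>End_ring smult C\<^esub> block_inj n) = F n"
proof -
  have F: "\<And>n. F n \<in> endos smult C"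
    using assms by (auto simp: End_ring_def)
  show ?thesis
    by (rule bexI[of _ "block_diag F"])
      (simp_all add: End_ring_def block_diag_endo[OF F] block_proj_diag_inj[OF F])
qed

end

theorem theorem5:
  fixes smult :: "'r::ring_1 \<Rightarrow> 'm::ab_group_add \<Rightarrow> 'm"
    and \<Omega> :: "'i set"
    and C :: "('i \<Rightarrow> 'm) set"
    and U :: "(('i \<Rightarrow> 'm) \<Rightarrow> ('i \<Rightarrow> 'm)) set"
  assumes "left_module smult"
    and "\<exists>x::'m. x \<noteq> 0"
    and "infinite \<Omega>"
    and "C = dsum \<Omega> \<or> C = dprod \<Omega>"
    and "U \<subseteq> carrier (End_ring smult C)"
    and "generates_ring (End_ring smult C) U"
  shows "\<exists>n::nat. n > 0 \<and> (\<forall>r \<in> carrier (End_ring smult C). \<exists>k \<le> n. rword (End_ring smult C) U k r)"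
proof -
  obtain e :: "nat \<times> 'i \<Rightarrow> 'i" where "inj_on e (UNIV \<times> \<Omega>)" "e ` (UNIV \<times> \<Omega>) \<subseteq> \<Omega>"
    using infinite_embeds_nat_times[OF assms(3)] by blast
  with assms(1,4) interpret nat_blocks smult \<Omega> C e
    by unfold_locales
  show ?thesis
    using uniform_word_length_bound[OF assms(6), of block_inj block_proj]
      block_inj_endo block_proj_endo End_ring_block_diagonal
    by (auto simp: End_ring_def)
qed

end
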